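(* Let $T_1$ be a quadtree in $\mathbb{R}^d$ with extended quadtree $T^*$, and let $\{C_i\in T^*\mid i\in[a,b]\}$ be a chain of length $k=b-a$. Then for every index $j$ with $j,j+1\in[a,b]$, the cells $C_j$ and $C_{j+1}$ are not family related.
   Context: A quadtree on an axis-aligned root hypercube $R\subset\mathbb{R}^d$ is a hierarchical decomposition in which every node has an associated axis-aligned hypercube (cell) and is either a leaf or has $2^d$ equal-sized children whose cells subdivide its cell. The size $|C|$ of a cell is its edge length. Two cells are neighbors if they are interior-disjoint and share (part of) a $(d-1)$-dimensional facet. Two cells $C_1,C_2$ with $|C_1|\le|C_2|$ are family related if the parent of $C_2$ is an ancestor of $C_1$. For an integer $j$, a cell $C$ is $2^j$-smooth if every leaf neighboring $C$ has size at most $2^j|C|$. Extended quadtree: the cells of $T_1$ get brand $1$. Recursively, for $j\ge1$, let $T^j$ be the quadtree formed by $\bigcup_{i\le j}T_i$, and let $T_{j+1}$ be the minimal set of cells obtained by splitting cells of $T^j$ such that every cell of $T_j$ is $2^j$-smooth in the resulting quadtree; the cells of $T_{j+1}$ get brand $j+1$. The extended quadtree is $T^*=T^{d+1}$. A chain of length $k=b-a$ in $T^*$ is an ordered set $\{C_i\in T^*\mid i\in[a,b]\}$ such that each $C_j$ has brand $j$ and, for each $j\in[a,b-1]$, $C_j$ neighbors $C_{j+1}$ and $|C_{j+1}|=2^j|C_j|$. *)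

theory Defs
  imports "HOL-Analysis.Analysis"
begin

text \<open>A cell (axis-aligned hypercube in R^d, d = CARD('n)) is represented by its
  lower corner and its edge length.\<close>
type_synonym 'n cell = "(real^'n) \<times> real"

definition cell_set :: "'n::finite cell \<Rightarrow> (real^'n) set" where
  "cell_set C = cbox (fst C) (fst C + snd C *\<^sub>R One)"

definition cell_size :: "'n::finite cell \<Rightarrow> real" where
  "cell_size C = snd C"

definition children :: "'n::finite cell \<Rightarrow> 'n cell set" where
  "children C = {(fst C + (snd C / 2) *\<^sub>R v, snd C / 2) | v. \<forall>i. v $ i \<in> {0, 1}}"

definition quadtree :: "'n::finite cell \<Rightarrow> 'n cell set \<Rightarrow> bool" where
  "quadtree R T \<longleftrightarrow> 0 < snd R \<and> finite T \<and> R \<in> T \<and>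
     (\<forall>X\<in>T. X = R \<or> (\<exists>P\<in>T. X \<in> children P)) \<and>
     (\<forall>P\<in>T. children P \<inter> T = {} \<or> children P \<subseteq> T)"

definition leaf :: "'n::finite cell set \<Rightarrow> 'n cell \<Rightarrow> bool" where
  "leaf T C \<longleftrightarrow> C \<in> T \<and> children C \<inter> T = {}"

definition neighbors :: "'n::finite cell \<Rightarrow> 'n cell \<Rightarrow> bool" where
  "neighbors C1 C2 \<longleftrightarrow> interior (cell_set C1) \<inter> interior (cell_set C2) = {} \<and>
     (\<exists>F G. F facet_of cell_set C1 \<and> G facet_of cell_set C2 \<and>
            aff_dim (F \<inter> G) = int CARD('n) - 1)"

definition smooth :: "'n::finite cell set \<Rightarrow> nat \<Rightarrow> 'n cell \<Rightarrow> bool" where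
  "smooth T j C \<longleftrightarrow> (\<forall>L. leaf T L \<and> neighbors L C \<longrightarrow> cell_size L \<le> 2 ^ j * cell_size C)"

definition ancestor :: "'n::finite cell set \<Rightarrow> 'n cell \<Rightarrow> 'n cell \<Rightarrow> bool" where
  "ancestor T P C \<longleftrightarrow> (P, C) \<in> {(X, Y). X \<in> T \<and> Y \<in> children X}\<^sup>*"

definition fam_rel_ord :: "'n::finite cell set \<Rightarrow> 'n cell \<Rightarrow> 'n cell \<Rightarrow> bool" where
  "fam_rel_ord T C1 C2 \<longleftrightarrow> (\<exists>P\<in>T. C2 \<in> children P \<and> ancestor T P C1)"

definition family_related :: "'n::finite cell set \<Rightarrow> 'n cell \<Rightarrow> 'n cell \<Rightarrow> bool" where
  "family_related T C1 C2 \<longleftrightarrow>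
     (if cell_size C1 \<le> cell_size C2 then fam_rel_ord T C1 C2 else fam_rel_ord T C2 C1)"

text \<open>Stages of the extended quadtree: ext_stage R T1 n = (T^(n+1), T_(n+1)).\<close>
fun ext_stage :: "'n::finite cell \<Rightarrow> 'n cell set \<Rightarrow> nat \<Rightarrow> 'n cell set \<times> 'n cell set" where
  "ext_stage R T1 0 = (T1, T1)"
| "ext_stage R T1 (Suc n) =
     (let U = fst (ext_stage R T1 n); N = snd (ext_stage R T1 n);
          U' = (LEAST Q. quadtree R Q \<and> U \<subseteq> Q \<and> (\<forall>C\<in>N. smooth Q (Suc n) C))
      in (U', U' - U))"

text \<open>T^j and T_j (cells of brand j), for j \<ge> 1.\<close>
definition Tup :: "'n::finite cell \<Rightarrow> 'n cell set \<Rightarrow> nat \<Rightarrow> 'n cell set" where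
  "Tup R T1 j = fst (ext_stage R T1 (j - 1))"

definition brand_cells :: "'n::finite cell \<Rightarrow> 'n cell set \<Rightarrow> nat \<Rightarrow> 'n cell set" where
  "brand_cells R T1 j = snd (ext_stage R T1 (j - 1))"

definition ext_quadtree :: "'n::finite cell \<Rightarrow> 'n cell set \<Rightarrow> 'n cell set" where
  "ext_quadtree R T1 = Tup R T1 (CARD('n) + 1)"

definition has_brand :: "'n::finite cell \<Rightarrow> 'n cell set \<Rightarrow> 'n cell \<Rightarrow> nat \<Rightarrow> bool" where
  "has_brand R T1 C j \<longleftrightarrow> 1 \<le> j \<and> j \<le> CARD('n) + 1 \<and> C \<in> ext_quadtree R T1 \<and>
     C \<in> brand_cells R T1 j"

definition is_chain :: "'n::finite cell \<Rightarrow> 'n cell set \<Rightarrow> (nat \<Rightarrow> 'n cell) \<Rightarrow> nat \<Rightarrow> nat \<Rightarrow> bool" where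
  "is_chain R T1 C a b \<longleftrightarrow> a \<le> b \<and>
     (\<forall>i. a \<le> i \<and> i \<le> b \<longrightarrow> has_brand R T1 (C i) i) \<and>
     (\<forall>j. a \<le> j \<and> j < b \<longrightarrow> neighbors (C j) (C (Suc j)) \<and>
          cell_size (C (Suc j)) = 2 ^ j * cell_size (C j))"

end

theory Submission
  imports Defs
begin

text \<open>The cell \<open>C\<^sub>j\<close> belongs to the quadtree \<open>T\<^sup>j\<close> while \<open>C\<^sub>j\<^sub>+\<^sub>1\<close> does not. All quadtrees on \<open>R\<close>
  live on the same dyadic grid, so a cell of positive size has at most one possible parent, and
  therefore every ancestor in \<open>T\<^sup>*\<close> of a cell of \<open>T\<^sup>j\<close> already lies in \<open>T\<^sup>j\<close>. If the parent \<open>P\<close> of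
  \<open>C\<^sub>j\<^sub>+\<^sub>1\<close> were an ancestor of \<open>C\<^sub>j\<close>, it would be a proper one, because \<open>C\<^sub>j\<^sub>+\<^sub>1\<close> is at least as
  large as \<open>C\<^sub>j\<close>; so some child of \<open>P\<close> lies in \<open>T\<^sup>j\<close>, hence all of them do, \<open>C\<^sub>j\<^sub>+\<^sub>1\<close> included.

  Most of the work goes into showing that every \<open>T\<^sup>j\<close> is a quadtree at all: the minimal refinement
  in its definition exists because quadtrees on \<open>R\<close> are closed under unions and intersections,
  and refining uniformly to a sufficient depth achieves any prescribed smoothness.\<close>

lemma One_nth [simp]: "(One :: real^'n::finite) $ i = 1"
  by (metis Cart_1 one_index)

lemma cell_set_subset_corner:
  assumes "snd X \<le> 0"
  shows "cell_set X \<subseteq> {fst X}"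
proof
  fix x assume "x \<in> cell_set X"
  hence "fst X $ i \<le> x $ i \<and> x $ i \<le> fst X $ i + snd X" for i
    unfolding cell_set_def mem_box_cart vector_add_component vector_scaleR_component One_nth
    by simp
  hence "x = fst X"
    using assms by (simp add: vec_eq_iff) (meson order_antisym add_le_same_cancel1 order_trans)
  thus "x \<in> {fst X}" by simp
qed

lemma facet_of_cell_set_imp_pos:
  assumes "F facet_of cell_set X"
  shows "0 < snd X"
proof (rule ccontr)
  assume "\<not> 0 < snd X"
  hence "cell_set X \<subseteq> {fst X}" by (intro cell_set_subset_corner) simp
  moreover have F: "F \<noteq> {}" "F \<subseteq> cell_set X" "aff_dim F = aff_dim (cell_set X) - 1"
    using assms face_of_imp_subset unfolding facet_of_def by blast+
  ultimately have "F = cell_set X" by blast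
  thus False using F(3) by simp
qed

lemma neighbors_imp_pos: "neighbors X Y \<Longrightarrow> 0 < snd X \<and> 0 < snd Y"
  unfolding neighbors_def using facet_of_cell_set_imp_pos by blast

subsection \<open>The dyadic grid of a root cell\<close>

fun dyadic_level :: "'n::finite cell \<Rightarrow> nat \<Rightarrow> 'n cell set" where
  "dyadic_level R 0 = {R}"
| "dyadic_level R (Suc k) = \<Union>(children ` dyadic_level R k)"

lemma mem_children_iff:
  "X \<in> children P \<longleftrightarrow>
     (\<exists>w. (\<forall>i. w $ i \<in> {0, 1}) \<and> X = (fst P + (snd P / 2) *\<^sub>R w, snd P / 2))"
  unfolding children_def by blast

lemma size_child: "X \<in> children P \<Longrightarrow> snd X = snd P / 2"
  unfolding mem_children_iff by auto

lemma children_size_zero: "snd P = 0 \<Longrightarrow> children P = {P}"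
  unfolding children_def by (auto simp: prod_eq_iff intro: exI[of _ 0])

lemma corner_child: "(fst P, snd P / 2) \<in> children P"
  unfolding mem_children_iff by (rule exI[of _ 0]) simp

lemma finite_children: "finite (children (P :: 'n::finite cell))"
proof -
  have "{w :: real^'n. \<forall>i. w $ i \<in> {0, 1}} \<subseteq> vec_lambda ` (PiE UNIV (\<lambda>_. {0, 1}))"
  proof
    fix w :: "real^'n" assume "w \<in> {w. \<forall>i. w $ i \<in> {0, 1}}"
    hence "vec_nth w \<in> PiE UNIV (\<lambda>_. {0, 1})" by auto
    thus "w \<in> vec_lambda ` (PiE UNIV (\<lambda>_. {0, 1}))" by (metis image_eqI vec_nth_inverse)
  qed
  hence "finite {w :: real^'n. \<forall>i. w $ i \<in> {0, 1}}"
    by (rule finite_subset) (simp add: finite_PiE)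
  moreover have "children P =
      (\<lambda>w. (fst P + (snd P / 2) *\<^sub>R w, snd P / 2)) ` {w. \<forall>i. w $ i \<in> {0, 1}}"
    unfolding children_def by blast
  ultimately show ?thesis by simp
qed

lemma finite_dyadic_level: "finite (dyadic_level R k)"
  by (induction k) (auto simp: finite_children)

lemma dyadic_level_on_grid:
  "X \<in> dyadic_level R k \<Longrightarrow>
     \<exists>v. (\<forall>i. v $ i \<in> \<int>) \<and> X = (fst R + (snd R / 2 ^ k) *\<^sub>R v, snd R / 2 ^ k)"
proof (induction k arbitrary: X)
  case 0
  show ?case using 0 by (auto intro: exI[of _ 0])
next
  case (Suc k)
  then obtain P where P: "P \<in> dyadic_level R k" "X \<in> children P" by auto
  obtain u where u: "\<forall>i. u $ i \<in> \<int>" "P = (fst R + (snd R / 2 ^ k) *\<^sub>R u, snd R / 2 ^ k)"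
    using Suc.IH[OF P(1)] by blast
  obtain w where w: "\<forall>i. w $ i \<in> {0, 1}" "X = (fst P + (snd P / 2) *\<^sub>R w, snd P / 2)"
    using P(2) unfolding mem_children_iff by blast
  have "\<forall>i. w $ i \<in> \<int>" using w(1) by (metis Ints_0 Ints_1 insert_iff singletonD)
  hence "\<forall>i. (2 *\<^sub>R u + w) $ i \<in> \<int>" using u(1) by (simp add: Ints_add Ints_mult)
  moreover have "X = (fst R + (snd R / 2 ^ Suc k) *\<^sub>R (2 *\<^sub>R u + w), snd R / 2 ^ Suc k)"
    unfolding w(2) u(2) by (simp add: vec_eq_iff algebra_simps)
  ultimately show ?case by blast
qed

lemma size_dyadic_level: "X \<in> dyadic_level R k \<Longrightarrow> snd X = snd R / 2 ^ k"
  using dyadic_level_on_grid by fastforce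

lemma Ints_abs_less_one_eq_zero: "(z :: real) \<in> \<int> \<Longrightarrow> \<bar>z\<bar> < 1 \<Longrightarrow> z = 0"
  by (auto elim: Ints_cases)

text \<open>Two grid cells of the same size whose corners differ by less than one cell width in every
  coordinate coincide.\<close>
lemma dyadic_level_parent_unique:
  assumes R: "0 < snd R"
    and P1: "P1 \<in> dyadic_level R k1" and P2: "P2 \<in> dyadic_level R k2"
    and X: "X \<in> children P1" "X \<in> children P2"
  shows "P1 = P2"
proof -
  obtain u1 where u1: "\<forall>i. u1 $ i \<in> \<int>" "P1 = (fst R + (snd R / 2 ^ k1) *\<^sub>R u1, snd R / 2 ^ k1)"
    using dyadic_level_on_grid[OF P1] by blast
  obtain u2 where u2: "\<forall>i. u2 $ i \<in> \<int>" "P2 = (fst R + (snd R / 2 ^ k2) *\<^sub>R u2, snd R / 2 ^ k2)"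
    using dyadic_level_on_grid[OF P2] by blast
  obtain w1 where w1: "\<forall>i. w1 $ i \<in> {0, 1}" "X = (fst P1 + (snd P1 / 2) *\<^sub>R w1, snd P1 / 2)"
    using X(1) unfolding mem_children_iff by blast
  obtain w2 where w2: "\<forall>i. w2 $ i \<in> {0, 1}" "X = (fst P2 + (snd P2 / 2) *\<^sub>R w2, snd P2 / 2)"
    using X(2) unfolding mem_children_iff by blast
  define h where "h = snd R / 2 ^ k1"
  have h: "0 < h" unfolding h_def using R by simp
  have same_size: "snd R / 2 ^ k2 = h"
    using w1(2) w2(2) u1(2) u2(2) unfolding h_def by auto
  have "u1 $ i = u2 $ i" for i
  proof -
    have "h * u1 $ i + (h / 2) * w1 $ i = h * u2 $ i + (h / 2) * w2 $ i"
      using w1(2) w2(2) u1(2) u2(2) same_size unfolding h_def by (simp add: vec_eq_iff)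
    hence "2 * (u1 $ i - u2 $ i) = w2 $ i - w1 $ i"
      using h by (simp add: field_simps) (smt (verit) mult_left_cancel distrib_left)
    hence "\<bar>u1 $ i - u2 $ i\<bar> < 1" using w1(1) w2(1) by (smt (verit) insertE singletonD)
    moreover have "u1 $ i - u2 $ i \<in> \<int>" using u1(1) u2(1) by (simp add: Ints_diff)
    ultimately show ?thesis using Ints_abs_less_one_eq_zero by force
  qed
  thus ?thesis using u1(2) u2(2) same_size unfolding h_def by (simp add: vec_eq_iff)
qed

subsection \<open>Quadtrees live on the dyadic grid\<close>

lemma quadtree_children_subset:
  "quadtree R Q \<Longrightarrow> P \<in> Q \<Longrightarrow> Y \<in> children P \<Longrightarrow> Y \<in> Q \<Longrightarrow> children P \<subseteq> Q"
  unfolding quadtree_def by blast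

text \<open>A quadtree may contain junk cells of size zero (such a cell is its own child), but no cell
  of negative size: following parents, sizes would double forever inside a finite set.\<close>
lemma quadtree_size_nonneg:
  assumes q: "quadtree R T" and X: "X \<in> T"
  shows "0 \<le> snd X"
proof -
  have fin: "finite T" and R: "R \<in> T" "0 < snd R"
    and par: "\<forall>X\<in>T. X = R \<or> (\<exists>P\<in>T. X \<in> children P)"
    using q unfolding quadtree_def by auto
  define M where "M = Min (snd ` T)"
  have "M \<in> snd ` T" unfolding M_def using fin R by (intro Min_in) auto
  then obtain X0 where X0: "X0 \<in> T" "snd X0 = M" by auto
  have M_le: "Y \<in> T \<Longrightarrow> M \<le> snd Y" for Y unfolding M_def using fin by simp
  have "0 \<le> M"
  proof (rule ccontr)
    assume neg: "\<not> 0 \<le> M"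
    hence "X0 \<noteq> R" using X0 R by auto
    then obtain P where "P \<in> T" "X0 \<in> children P" using par X0 by auto
    thus False using M_le[of P] size_child[of X0 P] X0 neg by simp
  qed
  thus ?thesis using M_le[OF X] by simp
qed

lemma quadtree_in_dyadic_level:
  assumes q: "quadtree R T" and X: "X \<in> T" and pos: "0 < snd X"
  shows "\<exists>k. X \<in> dyadic_level R k"
proof (rule ccontr)
  assume nX: "\<not> (\<exists>k. X \<in> dyadic_level R k)"
  have fin: "finite T" and par: "\<forall>X\<in>T. X = R \<or> (\<exists>P\<in>T. X \<in> children P)"
    using q unfolding quadtree_def by auto
  define S where "S = {X\<in>T. 0 < snd X \<and> (\<forall>k. X \<notin> dyadic_level R k)}"
  have "finite S" "X \<in> S" unfolding S_def using fin X pos nX by auto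
  define M where "M = Max (snd ` S)"
  have "M \<in> snd ` S" unfolding M_def using \<open>finite S\<close> \<open>X \<in> S\<close> by (intro Max_in) auto
  then obtain X0 where X0: "X0 \<in> S" "snd X0 = M" by auto
  have M_ge: "Y \<in> S \<Longrightarrow> snd Y \<le> M" for Y unfolding M_def using \<open>finite S\<close> by simp
  have "X0 \<noteq> R" using X0(1) dyadic_level.simps(1)[of R] unfolding S_def by blast
  then obtain P where P: "P \<in> T" "X0 \<in> children P" using par X0 unfolding S_def by auto
  have "snd P = 2 * M" "0 < M" using size_child[OF P(2)] X0 unfolding S_def by auto
  hence "P \<notin> S" using M_ge[of P] by linarith
  then obtain k where "P \<in> dyadic_level R k" using P(1) \<open>snd P = 2 * M\<close> \<open>0 < M\<close>
    unfolding S_def by auto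
  hence "X0 \<in> dyadic_level R (Suc k)" using P(2) by auto
  thus False using X0(1) unfolding S_def by blast
qed

lemma quadtree_size_le_root:
  assumes q: "quadtree R T" and X: "X \<in> T"
  shows "snd X \<le> snd R"
proof (cases "snd X = 0")
  case True
  thus ?thesis using q unfolding quadtree_def by simp
next
  case False
  hence "0 < snd X" using quadtree_size_nonneg[OF q X] by simp
  then obtain k where "X \<in> dyadic_level R k" using quadtree_in_dyadic_level[OF q X] by blast
  thus ?thesis using q unfolding quadtree_def
    by (simp add: size_dyadic_level divide_le_eq)
qed

lemma quadtree_contains_parent:
  assumes W: "quadtree R W" and T: "quadtree R T"
    and P: "P \<in> T" and Y: "Y \<in> children P" "Y \<in> W"
  shows "P \<in> W"
proof (cases "snd P = 0")
  case True
  thus ?thesis using Y children_size_zero[OF True] by simp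
next
  case False
  hence P_pos: "0 < snd P" using quadtree_size_nonneg[OF T P] by simp
  have R: "0 < snd R" using T unfolding quadtree_def by simp
  have "snd Y < snd R"
    using size_child[OF Y(1)] quadtree_size_le_root[OF T P] P_pos by simp
  hence "Y \<noteq> R" by auto
  then obtain P' where P': "P' \<in> W" "Y \<in> children P'" using W Y(2) unfolding quadtree_def by blast
  have "0 < snd P'" using size_child[OF P'(2)] size_child[OF Y(1)] P_pos by simp
  obtain k where "P \<in> dyadic_level R k" using quadtree_in_dyadic_level[OF T P P_pos] by blast
  moreover obtain k' where "P' \<in> dyadic_level R k'"
    using quadtree_in_dyadic_level[OF W P'(1) \<open>0 < snd P'\<close>] by blast
  ultimately have "P = P'" using dyadic_level_parent_unique[OF R _ _ Y(1) P'(2)] by blast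
  thus ?thesis using P' by simp
qed

lemma ancestor_mem_quadtree:
  assumes Q: "quadtree R Q" and T: "quadtree R T" and C: "C \<in> Q" and anc: "ancestor T P C"
  shows "P \<in> Q"
  using anc[unfolded ancestor_def]
proof (induction rule: converse_rtrancl_induct)
  case base
  show ?case using C .
next
  case (step Y Z)
  thus ?case using quadtree_contains_parent[OF Q T] by blast
qed

lemma proper_ancestor_children_subset:
  assumes Q: "quadtree R Q" and T: "quadtree R T" and C: "C \<in> Q"
    and anc: "ancestor T P C" and "P \<noteq> C"
  shows "children P \<subseteq> Q"
proof -
  obtain Z where Z: "P \<in> T" "Z \<in> children P" "ancestor T Z C"
    using anc \<open>P \<noteq> C\<close> unfolding ancestor_def by (cases rule: converse_rtranclE) blast+
  show ?thesis
    using quadtree_children_subset[OF Q] ancestor_mem_quadtree[OF Q T C] anc Z by blast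
qed

lemma quadtree_Un:
  assumes U: "quadtree R U" and V: "quadtree R V"
  shows "quadtree R (U \<union> V)"
  unfolding quadtree_def
proof (intro conjI ballI)
  show "0 < snd R" "finite (U \<union> V)" "R \<in> U \<union> V" using U V unfolding quadtree_def by auto
next
  fix X assume "X \<in> U \<union> V"
  thus "X = R \<or> (\<exists>P\<in>U \<union> V. X \<in> children P)" using U V unfolding quadtree_def by blast
next
  fix P assume P: "P \<in> U \<union> V"
  have "children P \<subseteq> W"
    if W: "quadtree R W" and Y: "Y \<in> children P" "Y \<in> W" for W Y
    using P quadtree_children_subset[OF W _ Y] quadtree_contains_parent[OF W _ _ Y] U V
    by blast
  thus "children P \<inter> (U \<union> V) = {} \<or> children P \<subseteq> U \<union> V" using U V by blast
qed

lemma quadtree_Inter: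
  assumes V: "V \<noteq> {}" "\<And>Q. Q \<in> V \<Longrightarrow> quadtree R Q"
  shows "quadtree R (\<Inter>V)"
proof -
  obtain Q0 where Q0: "Q0 \<in> V" using V(1) by blast
  have q0: "quadtree R Q0" using V(2)[OF Q0] .
  show ?thesis
    unfolding quadtree_def
  proof (intro conjI ballI)
    show "0 < snd R" "finite (\<Inter>V)" "R \<in> \<Inter>V"
      using q0 V(2) Q0 finite_subset[OF Inter_lower[OF Q0]] unfolding quadtree_def by auto
  next
    fix X assume X: "X \<in> \<Inter>V"
    show "X = R \<or> (\<exists>P\<in>\<Inter>V. X \<in> children P)"
    proof (cases "X = R")
      case False
      then obtain P where P: "P \<in> Q0" "X \<in> children P"
        using q0 X Q0 unfolding quadtree_def by blast
      have "P \<in> \<Inter>V" using quadtree_contains_parent[OF V(2) q0 P(1) P(2)] X by blast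
      thus ?thesis using P(2) by blast
    qed simp
  next
    fix P assume "P \<in> \<Inter>V"
    thus "children P \<inter> \<Inter>V = {} \<or> children P \<subseteq> \<Inter>V"
      using quadtree_children_subset[OF V(2)] by blast
  qed
qed

lemma leaf_Inter:
  assumes V: "\<And>Q. Q \<in> V \<Longrightarrow> quadtree R Q" and L: "leaf (\<Inter>V) L"
  shows "\<exists>Q\<in>V. leaf Q L"
proof -
  obtain Q where Q: "Q \<in> V" "(fst L, snd L / 2) \<notin> Q"
    using L corner_child[of L] unfolding leaf_def by blast
  have "L \<in> Q" using L Q(1) unfolding leaf_def by blast
  hence "children L \<inter> Q = {}" using V[OF Q(1)] Q(2) corner_child[of L] unfolding quadtree_def by blast
  thus ?thesis using Q(1) \<open>L \<in> Q\<close> unfolding leaf_def by blast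
qed

subsection \<open>Smooth refinements\<close>

lemma quadtree_dyadic_levels_upto:
  assumes R: "0 < snd R"
  shows "quadtree R (\<Union>k\<le>K. dyadic_level R k)"
  unfolding quadtree_def
proof (intro conjI ballI)
  show "0 < snd R" using R .
  show "finite (\<Union>k\<le>K. dyadic_level R k)" by (simp add: finite_dyadic_level)
  show "R \<in> (\<Union>k\<le>K. dyadic_level R k)" by force
next
  fix X assume "X \<in> (\<Union>k\<le>K. dyadic_level R k)"
  then obtain k where k: "k \<le> K" "X \<in> dyadic_level R k" by blast
  thus "X = R \<or> (\<exists>P\<in>\<Union>k\<le>K. dyadic_level R k. X \<in> children P)"
    by (cases k) (auto intro: le_SucI)
next
  fix P assume "P \<in> (\<Union>k\<le>K. dyadic_level R k)"
  then obtain k where k: "k \<le> K" "P \<in> dyadic_level R k" by blast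
  have "Suc k \<le> K" if Y: "Y \<in> children P" "Y \<in> dyadic_level R k'" "k' \<le> K" for Y k'
  proof -
    have "snd R / 2 ^ k' = snd R / 2 ^ Suc k"
      using size_child[OF Y(1)] size_dyadic_level[OF Y(2)] size_dyadic_level[OF k(2)]
      by (simp add: mult.commute)
    hence "(2::real) ^ k' = 2 ^ Suc k" using R by (simp only: divide_cancel_left) simp
    hence "k' = Suc k" by (simp only: power_inject_exp one_less_numeral_iff semiring_norm(76))
    thus ?thesis using Y(3) by simp
  qed
  moreover have "children P \<subseteq> dyadic_level R (Suc k)" using k(2) by auto
  ultimately show "children P \<inter> (\<Union>k\<le>K. dyadic_level R k) = {} \<or>
      children P \<subseteq> (\<Union>k\<le>K. dyadic_level R k)"
    by blast
qed

lemma leaf_size_le_if_dyadic_levels_upto_subset: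
  assumes Q: "quadtree R Q" and full: "(\<Union>k\<le>K. dyadic_level R k) \<subseteq> Q"
    and L: "leaf Q L" "0 < snd L"
  shows "snd L \<le> snd R / 2 ^ K"
proof -
  obtain l where l: "L \<in> dyadic_level R l"
    using quadtree_in_dyadic_level[OF Q _ L(2)] L(1) unfolding leaf_def by blast
  have "\<not> l < K"
  proof
    assume "l < K"
    hence "children L \<subseteq> dyadic_level R (Suc l)" "Suc l \<le> K" using l by auto
    hence "(fst L, snd L / 2) \<in> Q" using full corner_child[of L] by blast
    thus False using L(1) corner_child[of L] unfolding leaf_def by blast
  qed
  thus ?thesis using size_dyadic_level[OF l] Q unfolding quadtree_def
    by (simp add: frac_le power_increasing)
qed

lemma exists_pow2_fraction_le_finite:
  assumes "0 < (c :: real)" "finite A"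
  shows "\<exists>K. \<forall>x\<in>A. 0 < x \<longrightarrow> c / 2 ^ K \<le> x"
proof (cases "{x\<in>A. 0 < x} = {}")
  case False
  define m where "m = Min {x\<in>A. 0 < x}"
  have "m \<in> {x\<in>A. 0 < x}" unfolding m_def using False assms(2) by (intro Min_in) auto
  moreover have "\<forall>x\<in>A. 0 < x \<longrightarrow> m \<le> x" unfolding m_def using assms(2) by simp
  ultimately have m: "0 < m" "\<forall>x\<in>A. 0 < x \<longrightarrow> m \<le> x" by auto
  obtain K where "(1 / 2) ^ K < m / c"
    using real_arch_pow_inv[of "m / c" "1 / 2"] m(1) assms(1) by auto
  hence "c / 2 ^ K \<le> m" using assms(1) by (simp add: power_divide field_simps)
  hence "\<forall>x\<in>A. 0 < x \<longrightarrow> c / 2 ^ K \<le> x" using m(2) by (meson order_trans)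
  thus ?thesis by blast
qed auto

lemma exists_smooth_refinement:
  assumes U: "quadtree R U" and N: "finite N"
  shows "\<exists>Q. quadtree R Q \<and> U \<subseteq> Q \<and> (\<forall>C\<in>N. smooth Q j C)"
proof -
  have R: "0 < snd R" using U unfolding quadtree_def by simp
  obtain K where K: "\<forall>C\<in>N. 0 < snd C \<longrightarrow> snd R / 2 ^ K \<le> snd C"
    using exists_pow2_fraction_le_finite[OF R finite_imageI[OF N, of snd]] by auto
  define Q where "Q = U \<union> (\<Union>k\<le>K. dyadic_level R k)"
  have Q: "quadtree R Q" unfolding Q_def using quadtree_Un[OF U quadtree_dyadic_levels_upto[OF R]] .
  have "smooth Q j C" if C: "C \<in> N" for C
    unfolding smooth_def cell_size_def
  proof (intro allI impI)
    fix L assume L: "leaf Q L \<and> neighbors L C"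
    hence pos: "0 < snd L" "0 < snd C" by (meson neighbors_imp_pos)+
    have "snd L \<le> snd R / 2 ^ K"
      using leaf_size_le_if_dyadic_levels_upto_subset[OF Q _ _ pos(1)] L unfolding Q_def by blast
    also have "\<dots> \<le> snd C" using K C pos(2) by blast
    also have "\<dots> \<le> 2 ^ j * snd C" using pos(2) by simp
    finally show "snd L \<le> 2 ^ j * snd C" .
  qed
  thus ?thesis using Q unfolding Q_def by blast
qed

text \<open>The \<open>LEAST\<close> in the definition of the stages refers to the subset order on sets of cells, so
  it is meaningful only if a least admissible refinement exists; it is the intersection of all
  admissible ones.\<close>
lemma quadtree_least_smooth_refinement:
  assumes U: "quadtree R U" and N: "finite N"
  shows "quadtree R (LEAST Q. quadtree R Q \<and> U \<subseteq> Q \<and> (\<forall>C\<in>N. smooth Q j C))"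
proof -
  define V where "V = {Q. quadtree R Q \<and> U \<subseteq> Q \<and> (\<forall>C\<in>N. smooth Q j C)}"
  have V: "V \<noteq> {}" "\<And>Q. Q \<in> V \<Longrightarrow> quadtree R Q"
    using exists_smooth_refinement[OF U N] unfolding V_def by blast+
  have "\<forall>C\<in>N. smooth (\<Inter>V) j C"
    unfolding smooth_def using leaf_Inter[OF V(2)] unfolding V_def smooth_def by blast
  hence "\<Inter>V \<in> V" using quadtree_Inter[OF V] unfolding V_def by blast
  hence "(LEAST Q. Q \<in> V) = \<Inter>V" by (rule Least_equality) (rule Inter_lower)
  thus ?thesis using quadtree_Inter[OF V] unfolding V_def by simp
qed

lemma snd_ext_stage_subset: "snd (ext_stage R T1 n) \<subseteq> fst (ext_stage R T1 n)"
  by (cases n) (auto simp: Let_def)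

lemma quadtree_ext_stage:
  assumes "quadtree R T1"
  shows "quadtree R (fst (ext_stage R T1 n))"
proof (induction n)
  case 0
  show ?case using assms by simp
next
  case (Suc n)
  have "finite (fst (ext_stage R T1 n))" using Suc.IH unfolding quadtree_def by simp
  hence "finite (snd (ext_stage R T1 n))" by (rule finite_subset[OF snd_ext_stage_subset])
  thus ?case using quadtree_least_smooth_refinement[OF Suc.IH] by (simp add: Let_def)
qed

lemma has_brand_mem_Tup: "has_brand R T1 C j \<Longrightarrow> C \<in> Tup R T1 j"
  using snd_ext_stage_subset unfolding has_brand_def brand_cells_def Tup_def by blast

lemma has_brand_Suc_not_mem_Tup:
  "has_brand R T1 C (Suc j) \<Longrightarrow> 1 \<le> j \<Longrightarrow> C \<notin> Tup R T1 j"
  by (cases j) (auto simp: has_brand_def brand_cells_def Tup_def Let_def)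

theorem lemma25:
  fixes R :: "'n::finite cell" and T1 :: "'n cell set" and C :: "nat \<Rightarrow> 'n cell"
    and a b :: nat
  assumes "quadtree R T1"
    and "is_chain R T1 C a b"
  shows "\<forall>j. a \<le> j \<and> j + 1 \<le> b \<longrightarrow>
           \<not> family_related (ext_quadtree R T1) (C j) (C (j + 1))"
proof (intro allI impI notI)
  fix j assume j: "a \<le> j \<and> j + 1 \<le> b"
    and fam: "family_related (ext_quadtree R T1) (C j) (C (j + 1))"
  have brand_j: "has_brand R T1 (C j) j" and brand_Suc: "has_brand R T1 (C (Suc j)) (Suc j)"
    and nb: "neighbors (C j) (C (Suc j))" and sz: "snd (C (Suc j)) = 2 ^ j * snd (C j)"
    using assms(2) j unfolding is_chain_def cell_size_def by auto
  have Tj: "quadtree R (Tup R T1 j)" and Ts: "quadtree R (ext_quadtree R T1)"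
    using quadtree_ext_stage[OF assms(1)] unfolding ext_quadtree_def Tup_def by blast+
  have pos: "0 < snd (C j)" using neighbors_imp_pos[OF nb] by simp
  moreover have "(1::real) < 2 * 2 ^ j" using one_le_power[of "2::real" j] by linarith
  ultimately have larger: "snd (C j) < 2 * snd (C (Suc j))" using sz by simp
  hence "fam_rel_ord (ext_quadtree R T1) (C j) (C (Suc j))"
    using fam sz pos unfolding family_related_def cell_size_def by (auto split: if_splits)
  then obtain P where P: "C (Suc j) \<in> children P" "ancestor (ext_quadtree R T1) P (C j)"
    unfolding fam_rel_ord_def by blast
  have "P \<noteq> C j" using size_child[OF P(1)] larger by auto
  hence "C (Suc j) \<in> Tup R T1 j"
    using proper_ancestor_children_subset[OF Tj Ts has_brand_mem_Tup[OF brand_j] P(2)] P(1) by blast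
  moreover have "1 \<le> j" using brand_j unfolding has_brand_def by simp
  ultimately show False using has_brand_Suc_not_mem_Tup[OF brand_Suc] by blast
qed

end
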